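(* Let $h$ be a penalty function on $\Delta$ with choice map $Q$ and let $p\in\Delta$. If $F_h(p,y_j)\to+\infty$ for some sequence $y_j\in\mathbb{R}^n$, then the sequence $x_j=Q(y_j)$ has no limit points in $\Delta_p$; in particular, $\liminf_{j\to\infty}\min\{x_{j,\alpha}:\alpha\in\operatorname{supp}(p)\}=0$.
   Context: $\Delta$ is the unit simplex of $\mathbb{R}^n$. A penalty function on $\Delta$ is $h:\Delta\to\mathbb{R}$, continuous, $C^\infty$ on the relative interior of every face of $\Delta$, and strongly convex: $h(tx_1+(1-t)x_2)\le th(x_1)+(1-t)h(x_2)-\tfrac12Kt(1-t)\|x_1-x_2\|^2$ for some $K>0$. $Q(y)=\arg\max_{x\in\Delta}\{\langle y,x\rangle-h(x)\}$; $h^*(y)=\max_{x\in\Delta}\{\langle y,x\rangle-h(x)\}$; Fenchel coupling $F_h(p,y)=h(p)+h^*(y)-\langle y,p\rangle$. $\Delta_p=\{x\in\Delta:\operatorname{supp}(x)\supseteq\operatorname{supp}(p)\}$. *)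

theory Defs
  imports "HOL-Analysis.Analysis"
begin

definition unit_simplex :: "(real^'n) set" where
  "unit_simplex = {x. (\<forall>i. 0 \<le> x $ i) \<and> (\<Sum>i\<in>UNIV. x $ i) = 1}"

definition supp :: "real^'n \<Rightarrow> 'n set" where
  "supp x = {i. x $ i \<noteq> 0}"

(* relative interior of the face of the unit_simplex spanned by the vertices in S *)
definition face_relint :: "'n set \<Rightarrow> (real^'n) set" where
  "face_relint S = {x \<in> unit_simplex. supp x = S}"

fun Ck_on :: "nat \<Rightarrow> (real^'n) set \<Rightarrow> (real^'n \<Rightarrow> real) \<Rightarrow> bool" where
  "Ck_on 0 U f = continuous_on U f"
| "Ck_on (Suc k) U f = (f differentiable_on U \<and>
      (\<forall>i. Ck_on k U (\<lambda>x. frechet_derivative f (at x) (axis i 1))))"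

definition Cinf_on :: "(real^'n) set \<Rightarrow> (real^'n \<Rightarrow> real) \<Rightarrow> bool" where
  "Cinf_on U f = (open U \<and> (\<forall>k. Ck_on k U f))"

(* h is C^infinity on the set A (a relatively open subset of an affine subspace)
   in the sense of admitting local smooth extensions *)
definition smooth_on_set :: "(real^'n) set \<Rightarrow> (real^'n \<Rightarrow> real) \<Rightarrow> bool" where
  "smooth_on_set A h = (\<forall>x\<in>A. \<exists>U g. x \<in> U \<and> Cinf_on U g \<and> (\<forall>y\<in>U \<inter> A. g y = h y))"

definition penalty_function :: "(real^'n \<Rightarrow> real) \<Rightarrow> bool" where
  "penalty_function h \<longleftrightarrow>
     continuous_on unit_simplex h \<and>
     (\<forall>S. S \<noteq> {} \<longrightarrow> smooth_on_set (face_relint S) h) \<and>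
     (\<exists>K>0. \<forall>x1\<in>unit_simplex. \<forall>x2\<in>unit_simplex. \<forall>t\<in>{0..1}.
        h (t *\<^sub>R x1 + (1 - t) *\<^sub>R x2)
          \<le> t * h x1 + (1 - t) * h x2 - K / 2 * t * (1 - t) * (norm (x1 - x2))\<^sup>2)"

definition choice_map :: "(real^'n \<Rightarrow> real) \<Rightarrow> real^'n \<Rightarrow> real^'n" where
  "choice_map h y = (THE x. x \<in> unit_simplex \<and> (\<forall>z\<in>unit_simplex. y \<bullet> z - h z \<le> y \<bullet> x - h x))"

definition conj_fun :: "(real^'n \<Rightarrow> real) \<Rightarrow> real^'n \<Rightarrow> real" where
  "conj_fun h y = (SUP x\<in>unit_simplex. y \<bullet> x - h x)"

definition fenchel_coupling :: "(real^'n \<Rightarrow> real) \<Rightarrow> real^'n \<Rightarrow> real^'n \<Rightarrow> real" where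
  "fenchel_coupling h p y = h p + conj_fun h y - y \<bullet> p"

definition simplex_p :: "real^'n \<Rightarrow> (real^'n) set" where
  "simplex_p p = {x \<in> unit_simplex. supp p \<subseteq> supp x}"

end

theory Submission
  imports Defs
begin

text \<open>
  Write \<open>x = Q(y)\<close> and \<open>m = min {x\<^sub>a : a \<in> supp p}\<close>. Since \<open>z = x + m (x - p)\<close> still
  lies in the simplex, optimality of \<open>x\<close> against \<open>z\<close> gives \<open>m \<langle>y, x - p\<rangle> \<le> h z - h x \<le> 2B\<close>,
  where \<open>B\<close> bounds \<open>|h|\<close> on the compact simplex. As \<open>F\<^sub>h(p, y) = h p - h x + \<langle>y, x - p\<rangle>\<close>,
  this yields \<open>F\<^sub>h(p, y) \<le> 2B + 2B/m\<close>; hence \<open>F\<^sub>h(p, y\<^sub>j) \<rightarrow> \<infinity>\<close> forces \<open>m\<^sub>j \<rightarrow> 0\<close>.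
  A limit point of \<open>x\<^sub>j\<close> in \<open>\<Delta>\<^sub>p\<close> would have a positive minimum over \<open>supp p\<close>,
  which by continuity of that minimum is impossible.
\<close>

definition min_over :: "'n set \<Rightarrow> real^'n \<Rightarrow> real" where
  "min_over S x = Min ((\<lambda>a. x $ a) ` S)"

lemma tendsto_Min_image:
  fixes f :: "'b \<Rightarrow> 'a \<Rightarrow> 'c::linorder_topology"
  assumes "finite S" and "\<And>i. i \<in> S \<Longrightarrow> ((\<lambda>j. f j i) \<longlongrightarrow> l i) F"
  shows "((\<lambda>j. Min ((\<lambda>i. f j i) ` S)) \<longlongrightarrow> Min (l ` S)) F"
  using assms
proof (induction S rule: finite_induct)
  case (insert a A)
  then show ?case
    by (cases "A = {}") (simp_all add: tendsto_min)
qed simp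

lemma tendsto_min_over:
  fixes x :: "'b \<Rightarrow> real^'n"
  assumes "(x \<longlongrightarrow> l) F"
  shows "((\<lambda>j. min_over S (x j)) \<longlongrightarrow> min_over S l) F"
  unfolding min_over_def
  by (rule tendsto_Min_image) (simp_all add: tendsto_vec_nth[OF assms])

lemma unit_simplex_nonneg: "x \<in> unit_simplex \<Longrightarrow> 0 \<le> x $ i"
  by (simp add: unit_simplex_def)

lemma unit_simplex_le_one:
  assumes "x \<in> unit_simplex" shows "x $ i \<le> 1"
proof -
  have "x $ i \<le> (\<Sum>j\<in>UNIV. x $ j)"
    using assms by (intro member_le_sum) (auto simp: unit_simplex_def)
  then show ?thesis using assms by (simp add: unit_simplex_def)
qed

lemma axis_in_unit_simplex: "axis i 1 \<in> unit_simplex"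
  by (simp add: unit_simplex_def axis_def)

lemma supp_nonempty_if_unit_simplex:
  assumes "p \<in> unit_simplex" shows "supp p \<noteq> {}"
proof
  assume "supp p = {}"
  then have "p = 0" by (auto simp: supp_def vec_eq_iff)
  then show False using assms by (simp add: unit_simplex_def)
qed

lemma convex_unit_simplex: "convex unit_simplex"
  unfolding convex_def unit_simplex_def
  by (auto simp: sum.distrib sum_distrib_left[symmetric])

lemma compact_unit_simplex: "compact (unit_simplex :: (real^'n) set)"
  unfolding compact_eq_bounded_closed
proof
  have "norm x \<le> real CARD('n)" if "x \<in> unit_simplex" for x :: "real^'n"
  proof -
    have "norm x \<le> (\<Sum>i\<in>UNIV. \<bar>x $ i\<bar>)" by (rule norm_le_l1_cart)
    also have "\<dots> \<le> (\<Sum>i\<in>(UNIV::'n set). 1)"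
      using that by (intro sum_mono) (simp add: unit_simplex_nonneg unit_simplex_le_one)
    finally show ?thesis by simp
  qed
  then show "bounded (unit_simplex :: (real^'n) set)"
    unfolding bounded_iff by blast
  have "unit_simplex = (\<Inter>i. {x::real^'n. 0 \<le> x $ i}) \<inter> {x. (\<Sum>i\<in>UNIV. x $ i) = 1}"
    by (auto simp: unit_simplex_def)
  also have "closed \<dots>"
    by (intro closed_Int closed_INT ballI closed_Collect_le closed_Collect_eq continuous_intros)
  finally show "closed (unit_simplex :: (real^'n) set)" .
qed

lemma min_over_supp_pos:
  assumes "x \<in> simplex_p p" "p \<in> unit_simplex"
  shows "0 < min_over (supp p) x"
proof -
  have "0 < x $ a" if "a \<in> supp p" for a
    using assms that unit_simplex_nonneg[of x a]
    by (force simp: simplex_p_def supp_def)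
  then show ?thesis
    unfolding min_over_def using supp_nonempty_if_unit_simplex[OF assms(2)] by simp
qed

lemma extrapolation_in_unit_simplex:
  assumes x: "x \<in> unit_simplex" and p: "p \<in> unit_simplex"
    and "0 \<le> t" and t_le: "\<And>a. a \<in> supp p \<Longrightarrow> t \<le> x $ a"
  shows "x + t *\<^sub>R (x - p) \<in> unit_simplex"
  unfolding unit_simplex_def mem_Collect_eq
proof (intro conjI allI)
  fix i
  show "0 \<le> (x + t *\<^sub>R (x - p)) $ i"
  proof (cases "i \<in> supp p")
    case True
    have "t * p $ i \<le> t" "0 \<le> t * x $ i"
      using \<open>0 \<le> t\<close> unit_simplex_le_one[OF p] unit_simplex_nonneg[OF x]
      by (simp_all add: mult_left_le)
    then show ?thesis using t_le[OF True] by (simp add: algebra_simps)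
  next
    case False
    then show ?thesis
      using \<open>0 \<le> t\<close> unit_simplex_nonneg[OF x] by (simp add: supp_def)
  qed
next
  show "(\<Sum>i\<in>UNIV. (x + t *\<^sub>R (x - p)) $ i) = 1"
    using x p by (simp add: unit_simplex_def sum.distrib sum_subtractf
        sum_distrib_left[symmetric])
qed

lemma maximiser_unique_if_strongly_convex:
  fixes h :: "'a::real_inner \<Rightarrow> real"
  assumes "convex C" and "K > 0"
    and strong: "\<And>x1 x2 t. x1 \<in> C \<Longrightarrow> x2 \<in> C \<Longrightarrow> t \<in> {0..1} \<Longrightarrow>
           h (t *\<^sub>R x1 + (1 - t) *\<^sub>R x2)
             \<le> t * h x1 + (1 - t) * h x2 - K / 2 * t * (1 - t) * (norm (x1 - x2))\<^sup>2"
    and max1: "x1 \<in> C" "\<forall>z\<in>C. y \<bullet> z - h z \<le> y \<bullet> x1 - h x1"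
    and max2: "x2 \<in> C" "\<forall>z\<in>C. y \<bullet> z - h z \<le> y \<bullet> x2 - h x2"
  shows "x1 = x2"
proof (rule ccontr)
  assume "x1 \<noteq> x2"
  define m where "m = (1/2) *\<^sub>R x1 + (1/2) *\<^sub>R x2"
  have "m \<in> C"
    unfolding m_def using \<open>convex C\<close> max1(1) max2(1) by (rule convexD) auto
  have gap: "0 < K / 8 * (norm (x1 - x2))\<^sup>2"
    using \<open>K > 0\<close> \<open>x1 \<noteq> x2\<close> by simp
  have "h m \<le> 1/2 * h x1 + 1/2 * h x2 - K / 8 * (norm (x1 - x2))\<^sup>2"
    using strong[OF max1(1) max2(1), of "1/2"] by (simp add: m_def)
  moreover have "y \<bullet> m = 1/2 * (y \<bullet> x1) + 1/2 * (y \<bullet> x2)"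
    by (simp add: m_def inner_add_right)
  moreover have "y \<bullet> m - h m \<le> y \<bullet> x1 - h x1" "y \<bullet> x1 - h x1 = y \<bullet> x2 - h x2"
    using max1 max2 \<open>m \<in> C\<close> by force+
  ultimately show False using gap by linarith
qed

lemma choice_map_maximises:
  assumes "penalty_function h"
  shows "choice_map h y \<in> unit_simplex"
    and "\<And>z. z \<in> unit_simplex \<Longrightarrow> y \<bullet> z - h z \<le> y \<bullet> choice_map h y - h (choice_map h y)"
proof -
  let ?max = "\<lambda>x. x \<in> unit_simplex \<and> (\<forall>z\<in>unit_simplex. y \<bullet> z - h z \<le> y \<bullet> x - h x)"
  obtain K where "K > 0" and strong: "\<forall>x1\<in>unit_simplex. \<forall>x2\<in>unit_simplex. \<forall>t\<in>{0..1}.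
        h (t *\<^sub>R x1 + (1 - t) *\<^sub>R x2)
          \<le> t * h x1 + (1 - t) * h x2 - K / 2 * t * (1 - t) * (norm (x1 - x2))\<^sup>2"
    using assms unfolding penalty_function_def by blast
  have "continuous_on unit_simplex (\<lambda>x. y \<bullet> x - h x)"
    using assms unfolding penalty_function_def by (intro continuous_intros) auto
  then obtain x where "?max x"
    using continuous_attains_sup[OF compact_unit_simplex] axis_in_unit_simplex by blast
  moreover have "x' = x" if "?max x'" for x'
    using that \<open>?max x\<close> strong
    by (intro maximiser_unique_if_strongly_convex[OF convex_unit_simplex \<open>K > 0\<close>]) auto
  ultimately have "choice_map h y = x"
    unfolding choice_map_def by (rule the_equality)
  with \<open>?max x\<close> show "choice_map h y \<in> unit_simplex"
    and "\<And>z. z \<in> unit_simplex \<Longrightarrow> y \<bullet> z - h z \<le> y \<bullet> choice_map h y - h (choice_map h y)"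
    by blast+
qed

lemma fenchel_coupling_choice_map:
  assumes "penalty_function h"
  shows "fenchel_coupling h p y = h p - h (choice_map h y) + y \<bullet> (choice_map h y - p)"
proof -
  have "conj_fun h y = y \<bullet> choice_map h y - h (choice_map h y)"
    unfolding conj_fun_def
    using choice_map_maximises[OF assms] by (intro cSup_eq_maximum) auto
  then show ?thesis
    by (simp add: fenchel_coupling_def inner_diff_right)
qed

lemma fenchel_coupling_le:
  assumes ph: "penalty_function h" and p: "p \<in> unit_simplex"
    and B: "\<And>x. x \<in> unit_simplex \<Longrightarrow> \<bar>h x\<bar> \<le> B"
    and "\<epsilon> > 0" and \<epsilon>_le: "\<epsilon> \<le> min_over (supp p) (choice_map h y)"
  shows "fenchel_coupling h p y \<le> 2 * B + 2 * B / \<epsilon>"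
proof -
  define x where "x = choice_map h y"
  define m where "m = min_over (supp p) x"
  have x: "x \<in> unit_simplex"
    unfolding x_def by (rule choice_map_maximises(1)[OF ph])
  have "m > 0" using \<epsilon>_le \<open>\<epsilon> > 0\<close> by (simp add: m_def x_def)
  have "m \<le> x $ a" if "a \<in> supp p" for a
    unfolding m_def min_over_def using that by simp
  then have z: "x + m *\<^sub>R (x - p) \<in> unit_simplex"
    using extrapolation_in_unit_simplex[OF x p] \<open>m > 0\<close> by simp
  have "y \<bullet> x + m * (y \<bullet> (x - p)) - h (x + m *\<^sub>R (x - p)) \<le> y \<bullet> x - h x"
    using choice_map_maximises(2)[OF ph z] by (simp add: x_def inner_add_right)
  then have "m * (y \<bullet> (x - p)) \<le> 2 * B"
    using B[OF z] B[OF x] by linarith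
  then have "y \<bullet> (x - p) \<le> 2 * B / m"
    using \<open>m > 0\<close> by (simp add: field_simps)
  also have "\<dots> \<le> 2 * B / \<epsilon>"
    using B[OF p] \<open>\<epsilon> > 0\<close> \<epsilon>_le by (intro divide_left_mono) (auto simp: m_def x_def)
  finally show ?thesis
    using fenchel_coupling_choice_map[OF ph, of p y] B[OF p] B[OF x] by (simp add: x_def)
qed

lemma min_over_choice_map_tendsto_zero:
  assumes ph: "penalty_function h" and p: "p \<in> unit_simplex"
    and F: "filterlim (\<lambda>j. fenchel_coupling h p (y j)) at_top sequentially"
  shows "(\<lambda>j. min_over (supp p) (choice_map h (y j))) \<longlonglongrightarrow> 0"
  unfolding lim_sequentially
proof (intro allI impI)
  fix \<epsilon> :: real assume "0 < \<epsilon>"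
  have "bounded (h ` unit_simplex)"
    using ph compact_unit_simplex unfolding penalty_function_def
    by (intro compact_imp_bounded compact_continuous_image) auto
  then obtain B where B: "\<And>x. x \<in> unit_simplex \<Longrightarrow> \<bar>h x\<bar> \<le> B"
    unfolding bounded_iff by auto
  obtain N where N: "\<And>j. j \<ge> N \<Longrightarrow> 2 * B + 2 * B / \<epsilon> < fenchel_coupling h p (y j)"
    using F unfolding filterlim_at_top_dense eventually_sequentially by blast
  have "\<bar>min_over (supp p) (choice_map h (y j))\<bar> < \<epsilon>" if "j \<ge> N" for j
  proof -
    have "0 \<le> min_over (supp p) (choice_map h (y j))"
      unfolding min_over_def
      using supp_nonempty_if_unit_simplex[OF p] choice_map_maximises(1)[OF ph]
      by (simp add: unit_simplex_nonneg)
    moreover have "\<not> \<epsilon> \<le> min_over (supp p) (choice_map h (y j))"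
      using fenchel_coupling_le[OF ph p B \<open>0 < \<epsilon>\<close>] N[OF that] by fastforce
    ultimately show ?thesis by simp
  qed
  then show "\<exists>N. \<forall>j\<ge>N. dist (min_over (supp p) (choice_map h (y j))) 0 < \<epsilon>"
    by auto
qed

theorem propositionC4:
  fixes h :: "real^'n \<Rightarrow> real" and p :: "real^'n" and y :: "nat \<Rightarrow> real^'n"
  assumes "penalty_function h"
    and "p \<in> unit_simplex"
    and "filterlim (\<lambda>j. fenchel_coupling h p (y j)) at_top sequentially"
  shows "\<not> (\<exists>x\<in>simplex_p p. \<exists>r::nat \<Rightarrow> nat. strict_mono r \<and>
             ((\<lambda>j. choice_map h (y (r j))) \<longlongrightarrow> x) sequentially)
         \<and> liminf (\<lambda>j. ereal (Min ((\<lambda>a. choice_map h (y j) $ a) ` supp p))) = 0"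
proof
  let ?m = "\<lambda>j. min_over (supp p) (choice_map h (y j))"
  have m0: "?m \<longlonglongrightarrow> 0"
    using min_over_choice_map_tendsto_zero[OF assms] .
  show "\<not> (\<exists>x\<in>simplex_p p. \<exists>r::nat \<Rightarrow> nat. strict_mono r \<and>
             ((\<lambda>j. choice_map h (y (r j))) \<longlongrightarrow> x) sequentially)"
  proof
    assume "\<exists>x\<in>simplex_p p. \<exists>r::nat \<Rightarrow> nat. strict_mono r \<and>
             ((\<lambda>j. choice_map h (y (r j))) \<longlongrightarrow> x) sequentially"
    then obtain x r where "x \<in> simplex_p p" "strict_mono r"
      and conv: "(\<lambda>j. choice_map h (y (r j))) \<longlonglongrightarrow> x" by blast
    have "(\<lambda>j. ?m (r j)) \<longlonglongrightarrow> min_over (supp p) x"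
      using tendsto_min_over[OF conv] .
    moreover have "(\<lambda>j. ?m (r j)) \<longlonglongrightarrow> 0"
      using LIMSEQ_subseq_LIMSEQ[OF m0 \<open>strict_mono r\<close>] by (simp add: o_def)
    ultimately show False
      using LIMSEQ_unique min_over_supp_pos[OF \<open>x \<in> simplex_p p\<close> assms(2)] by force
  qed
  show "liminf (\<lambda>j. ereal (Min ((\<lambda>a. choice_map h (y j) $ a) ` supp p))) = 0"
    using lim_imp_Liminf[OF trivial_limit_sequentially tendsto_ereal[OF m0]]
    by (simp add: min_over_def zero_ereal_def)
qed

end
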